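(* Let $P$ be a finite poset, $\epsilon\in\{1,-1\}$ and $T^\xi$ ($\xi\in S^{(\epsilon)}$) a generator of $\omega^{(\epsilon)}$. Then $$\deg T^\xi\le\max\{q^{(\epsilon)}(x_0,y_0,\ldots,x_t,y_t): y_0,x_1,\ldots,y_{t-1},x_t \text{ is a } q^{(\epsilon)}\text{-reduced sequence satisfying condition N'},\ x_0=-\infty,\ y_t=\infty\}.$$
   Context: $P^\pm=P\cup\{-\infty,\infty\}$, $-\infty<z<\infty$ for $z\in P$; $P^-=P\cup\{-\infty\}$; $\xi^+(B)=\sum_{b\in B}\xi(b)$. Saturated chain: $x=z_0\lessdot\cdots\lessdot z_t=y$, length $t$. $q^{(\epsilon)}\mathrm{dist}(x,y)=\max\{\epsilon t:$ saturated chain of length $t$ from $x$ to $y$ in $P^\pm\}$. For $w_0<z_0>w_1<\cdots>w_s<z_s$ in $P^\pm$, $q^{(\epsilon)}(w_0,z_0,\ldots,w_s,z_s)=\sum_{\ell=0}^s q^{(\epsilon)}\mathrm{dist}(w_\ell,z_\ell)-\sum_{\ell=0}^{s-1}q^{(\epsilon)}\mathrm{dist}(w_{\ell+1},z_\ell)$. Condition N': $y_0>x_1<y_1>\cdots<y_{t-1}>x_t$ in $P$ and $y_i\not>x_j$ whenever $i\le j-2$ (empty sequence allowed, giving value $q^{(\epsilon)}\mathrm{dist}(-\infty,\infty)$). $q^{(\epsilon)}$-reduced: with $x_0=-\infty,y_t=\infty$, $q^{(\epsilon)}\mathrm{dist}(x_i,y_j)<q^{(\epsilon)}(x_i,y_i,\ldots,x_j,y_j)$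 whenever $0\le i<j\le t$ and $x_i<y_j$. $S^{(m)}=\{\xi\in\mathbb Z^{P^-}:\xi(x)\ge m\ \forall x\in P,\ \xi(-\infty)\ge\xi^+(C)+m$ for all maximal chains $C\}$. $R=\mathbb K[\mathcal C(P)]=\bigoplus_{S^{(0)}}\mathbb KT^\xi$ (Ehrhart ring of the chain polytope; $T^\xi=\prod T_x^{\xi(x)}$, $\deg T^\xi=\xi(-\infty)$), $\omega^{(1)}=\omega=\bigoplus_{S^{(1)}}\mathbb KT^\xi$ canonical ideal, $\omega^{(-1)}=R:\omega=\bigoplus_{S^{(-1)}}\mathbb KT^\xi$. A generator of $\omega^{(\epsilon)}$ is a monomial $T^\xi$, $\xi\in S^{(\epsilon)}$, not of the form $T^{\xi_1}T^{\xi_2}$ with $\xi_1\in S^{(0)}$, $\xi_1(-\infty)>0$, $\xi_2\in S^{(\epsilon)}$. *)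

theory Defs
  imports Main
begin

text \<open>The finite poset P is a finite subset of a type with a partial order (induced order).
  P^\<pm> = P with adjoined bottom NegInf (-\<infinity>) and top PosInf (\<infinity>).\<close>

datatype 'a ext = NegInf | Elem 'a | PosInf

fun ext_less :: "'a::order ext \<Rightarrow> 'a ext \<Rightarrow> bool" where
  "ext_less NegInf NegInf = False"
| "ext_less NegInf _ = True"
| "ext_less (Elem a) (Elem b) = (a < b)"
| "ext_less (Elem a) PosInf = True"
| "ext_less (Elem a) NegInf = False"
| "ext_less PosInf _ = False"

definition in_ext :: "'a set \<Rightarrow> 'a ext \<Rightarrow> bool" where
  "in_ext P a = (case a of Elem x \<Rightarrow> x \<in> P | _ \<Rightarrow> True)"

definition covers_ext :: "'a::order set \<Rightarrow> 'a ext \<Rightarrow> 'a ext \<Rightarrow> bool" where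
  "covers_ext P a b = (in_ext P a \<and> in_ext P b \<and> ext_less a b \<and>
     \<not> (\<exists>c. in_ext P c \<and> ext_less a c \<and> ext_less c b))"

definition sat_chain :: "'a::order set \<Rightarrow> 'a ext list \<Rightarrow> bool" where
  "sat_chain P zs = (zs \<noteq> [] \<and> (\<forall>z\<in>set zs. in_ext P z) \<and>
     (\<forall>i. Suc i < length zs \<longrightarrow> covers_ext P (zs ! i) (zs ! Suc i)))"

definition qdist :: "'a::order set \<Rightarrow> int \<Rightarrow> 'a ext \<Rightarrow> 'a ext \<Rightarrow> int" where
  "qdist P \<epsilon> x y = Max {\<epsilon> * int t | t. \<exists>zs. sat_chain P zs \<and> length zs = Suc t \<and>
                                         hd zs = x \<and> last zs = y}"

definition qseq :: "'a::order set \<Rightarrow> int \<Rightarrow> (nat \<Rightarrow> 'a ext) \<Rightarrow> (nat \<Rightarrow> 'a ext) \<Rightarrow> nat \<Rightarrow> int" where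
  "qseq P \<epsilon> w z s = (\<Sum>l\<in>{0..s}. qdist P \<epsilon> (w l) (z l)) - (\<Sum>l<s. qdist P \<epsilon> (w (Suc l)) (z l))"

text \<open>Sequence y_0,x_1,y_1,...,y_{t-1},x_t (x, y :: nat \<Rightarrow> 'a), extended by x_0 = -\<infinity>, y_t = \<infinity>.\<close>
definition xseq :: "(nat \<Rightarrow> 'a) \<Rightarrow> nat \<Rightarrow> 'a ext" where
  "xseq x i = (if i = 0 then NegInf else Elem (x i))"

definition yseq :: "nat \<Rightarrow> (nat \<Rightarrow> 'a) \<Rightarrow> nat \<Rightarrow> 'a ext" where
  "yseq t y i = (if i = t then PosInf else Elem (y i))"

definition condN :: "'a::order set \<Rightarrow> nat \<Rightarrow> (nat \<Rightarrow> 'a) \<Rightarrow> (nat \<Rightarrow> 'a) \<Rightarrow> bool" where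
  "condN P t x y =
     ((\<forall>i<t. y i \<in> P) \<and> (\<forall>j. 1 \<le> j \<and> j \<le> t \<longrightarrow> x j \<in> P) \<and>
      (\<forall>i<t. x (Suc i) < y i) \<and>
      (\<forall>i. 1 \<le> i \<and> i < t \<longrightarrow> x i < y i) \<and>
      (\<forall>i j. i < t \<and> 1 \<le> j \<and> j \<le> t \<and> i + 2 \<le> j \<longrightarrow> \<not> (x j < y i)))"

definition q_reduced :: "'a::order set \<Rightarrow> int \<Rightarrow> nat \<Rightarrow> (nat \<Rightarrow> 'a) \<Rightarrow> (nat \<Rightarrow> 'a) \<Rightarrow> bool" where
  "q_reduced P \<epsilon> t x y =
     (\<forall>i j. i < j \<and> j \<le> t \<and> ext_less (xseq x i) (yseq t y j) \<longrightarrow>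
        qdist P \<epsilon> (xseq x i) (yseq t y j)
          < qseq P \<epsilon> (\<lambda>l. xseq x (i + l)) (\<lambda>l. yseq t y (i + l)) (j - i))"

definition is_chain_in :: "'a::order set \<Rightarrow> 'a set \<Rightarrow> bool" where
  "is_chain_in P C = (C \<subseteq> P \<and> (\<forall>a\<in>C. \<forall>b\<in>C. a \<le> b \<or> b \<le> a))"

definition maximal_chain :: "'a::order set \<Rightarrow> 'a set \<Rightarrow> bool" where
  "maximal_chain P C = (is_chain_in P C \<and> (\<forall>D. is_chain_in P D \<and> C \<subseteq> D \<longrightarrow> D = C))"

text \<open>\<xi> \<in> S^(m): \<xi> on P^- is given by d = \<xi>(-\<infinity>) and \<xi> restricted to P.\<close>
definition in_S :: "'a::order set \<Rightarrow> int \<Rightarrow> int \<Rightarrow> ('a \<Rightarrow> int) \<Rightarrow> bool" where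
  "in_S P m d \<xi> = ((\<forall>x\<in>P. \<xi> x \<ge> m) \<and>
     (\<forall>C. maximal_chain P C \<longrightarrow> d \<ge> sum \<xi> C + m))"

definition is_generator :: "'a::order set \<Rightarrow> int \<Rightarrow> int \<Rightarrow> ('a \<Rightarrow> int) \<Rightarrow> bool" where
  "is_generator P \<epsilon> d \<xi> = (in_S P \<epsilon> d \<xi> \<and>
     \<not> (\<exists>d1 \<xi>1 d2 \<xi>2. in_S P 0 d1 \<xi>1 \<and> d1 > 0 \<and> in_S P \<epsilon> d2 \<xi>2 \<and>
           d = d1 + d2 \<and> (\<forall>x\<in>P. \<xi> x = \<xi>1 x + \<xi>2 x)))"

end

theory Submission
  imports Defs
begin

text \<open>
  Extend \<open>\<xi>\<close> to \<open>P\<^sup>\<plusminus>\<close> by \<open>\<xi>(-\<infinity>) = 0\<close> and \<open>\<xi>(\<infinity>) = \<epsilon>\<close>, and let \<open>h(v)\<close> be the largest weight of a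
  saturated chain from \<open>-\<infinity>\<close> to \<open>v\<close>. The maximal chains of \<open>P\<close> are exactly the saturated chains
  from \<open>-\<infinity>\<close> to \<open>\<infinity>\<close>, so \<open>\<xi> \<in> S\<^sup>(\<^sup>\<epsilon>\<^sup>)\<close> means \<open>h(\<infinity>) \<le> \<xi>(-\<infinity>)\<close>, and for a generator equality
  holds (otherwise \<open>T\<^sup>\<xi>\<close> is divisible by the degree-one monomial \<open>T\<^sup>0\<close>).

  Always \<open>q\<^sup>(\<^sup>\<epsilon>\<^sup>)dist(x,y) + \<xi>(y) - \<epsilon> \<le> h(y) - h(x)\<close>; call \<open>(x,y)\<close> tight if equality holds. Along a
  path \<open>-\<infinity> = x\<^sub>0 < y\<^sub>0 > x\<^sub>1 < \<dots> > x\<^sub>t < y\<^sub>t = \<infinity>\<close> of tight pairs the height differences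
  telescope to \<open>h(\<infinity>) \<le> q\<^sup>(\<^sup>\<epsilon>\<^sup>)(x\<^sub>0,y\<^sub>0,\<dots>,x\<^sub>t,y\<^sub>t)\<close>, and a shortest such path satisfies N' and is
  \<open>q\<^sup>(\<^sup>\<epsilon>\<^sup>)\<close>-reduced, since a violation of either condition would allow to shorten it. Finally such a
  path exists when \<open>T\<^sup>\<xi>\<close> is a generator: otherwise the minimal starting points of tight paths
  form an antichain of elements of weight \<open>> \<epsilon>\<close> meeting every heaviest maximal chain, and subtracting
  its indicator function from \<open>\<xi>\<close> splits off a factor of degree one.
\<close>

lemma ext_less_irrefl [simp]: "\<not> ext_less z z"
  by (cases z) auto

lemma ext_less_trans: "ext_less x y \<Longrightarrow> ext_less y z \<Longrightarrow> ext_less x z"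
  by (cases x; cases y; cases z) auto

lemma transp_ext_less: "transp ext_less"
  by (auto simp: transp_def intro: ext_less_trans)

lemma ext_less_NegInf_iff [simp]: "ext_less NegInf z \<longleftrightarrow> z \<noteq> NegInf"
  by (cases z) auto

lemma ext_less_PosInf_iff [simp]: "ext_less z PosInf \<longleftrightarrow> z \<noteq> PosInf"
  by (cases z) auto

lemma not_ext_less_NegInf [simp]: "\<not> ext_less z NegInf"
  by (cases z) auto

lemma not_PosInf_ext_less [simp]: "\<not> ext_less PosInf z"
  by (cases z) auto

lemma in_ext_simps [simp]:
  "in_ext P NegInf" "in_ext P PosInf" "in_ext P (Elem a) \<longleftrightarrow> a \<in> P"
  by (auto simp: in_ext_def)

lemma finite_in_ext:
  assumes "finite P"
  shows "finite {z. in_ext P z}"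
proof -
  have "{z. in_ext P z} = insert NegInf (insert PosInf (Elem ` P))"
    by (auto simp: in_ext_def split: ext.splits) (metis ext.exhaust image_eqI)
  then show ?thesis
    using assms by simp
qed

lemma sorted_wrt_ext_less_distinct: "sorted_wrt ext_less zs \<Longrightarrow> distinct zs"
  by (induction zs) auto

lemma sorted_wrt_ext_less_nth_le:
  "sorted_wrt ext_less zs \<Longrightarrow> i \<le> j \<Longrightarrow> j < length zs \<Longrightarrow> zs ! i = zs ! j \<or> ext_less (zs ! i) (zs ! j)"
  by (metis le_neq_implies_less sorted_wrt_nth_less)

lemma sorted_wrt_ext_less_insert:
  assumes "sorted_wrt ext_less zs" "Suc i < length zs"
    and "ext_less (zs ! i) z" "ext_less z (zs ! Suc i)"
  shows "sorted_wrt ext_less (take (Suc i) zs @ z # drop (Suc i) zs)"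
proof -
  have below: "ext_less w z" if w: "w \<in> set (take (Suc i) zs)" for w
  proof -
    obtain j where "j < length (take (Suc i) zs)" "w = take (Suc i) zs ! j"
      using w by (metis in_set_conv_nth)
    then have j: "j \<le> i" "w = zs ! j"
      by simp_all
    then have "w = zs ! i \<or> ext_less w (zs ! i)"
      using sorted_wrt_ext_less_nth_le[OF assms(1) j(1)] assms(2) by auto
    then show ?thesis
      using assms(3) ext_less_trans[of w "zs ! i" z] by auto
  qed
  have above: "ext_less z w" if w: "w \<in> set (drop (Suc i) zs)" for w
  proof -
    obtain j where "j < length (drop (Suc i) zs)" "w = drop (Suc i) zs ! j"
      using w by (metis in_set_conv_nth)
    then have j: "Suc i + j < length zs" "w = zs ! (Suc i + j)"
      by simp_all
    then have "zs ! Suc i = w \<or> ext_less (zs ! Suc i) w"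
      using sorted_wrt_ext_less_nth_le[OF assms(1), of "Suc i" "Suc i + j"] by simp
    then show ?thesis
      using assms(4) ext_less_trans[of z "zs ! Suc i" w] by auto
  qed
  have "\<forall>a\<in>set (take (Suc i) zs). \<forall>b\<in>set (z # drop (Suc i) zs). ext_less a b"
  proof (intro ballI)
    fix a b assume a: "a \<in> set (take (Suc i) zs)" and "b \<in> set (z # drop (Suc i) zs)"
    then consider "b = z" | "b \<in> set (drop (Suc i) zs)"
      by auto
    then show "ext_less a b"
    proof cases
      case 1
      then show ?thesis using below[OF a] by simp
    next
      case 2
      then show ?thesis using ext_less_trans[OF below[OF a] above] by blast
    qed
  qed
  moreover have "sorted_wrt ext_less (z # drop (Suc i) zs)"
    using above sorted_wrt_drop[OF assms(1)] by simp
  ultimately show ?thesis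
    using sorted_wrt_take[OF assms(1)] by (simp add: sorted_wrt_append)
qed

lemma sorted_wrt_ext_less_gap:
  assumes "sorted_wrt ext_less zs" "zs \<noteq> []" "ext_less (hd zs) z" "ext_less z (last zs)"
    and "z \<notin> set zs" "\<forall>w\<in>set zs. ext_less w z \<or> ext_less z w"
  shows "\<exists>i. Suc i < length zs \<and> ext_less (zs ! i) z \<and> ext_less z (zs ! Suc i)"
  using assms
proof (induction zs)
  case Nil
  then show ?case by simp
next
  case (Cons a zs)
  have "zs \<noteq> []"
    using Cons.prems(3,4) ext_less_trans[of a z a] by (cases zs) auto
  show ?case
  proof (cases "ext_less (hd zs) z")
    case True
    then obtain i where "Suc i < length zs" "ext_less (zs ! i) z" "ext_less z (zs ! Suc i)"
      using Cons.IH Cons.prems \<open>zs \<noteq> []\<close> by auto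
    then show ?thesis
      by (intro exI[of _ "Suc i"]) simp
  next
    case False
    then have "ext_less z (zs ! 0)"
      using Cons.prems(5,6) \<open>zs \<noteq> []\<close> by (auto simp: hd_conv_nth)
    then show ?thesis
      using Cons.prems(3) \<open>zs \<noteq> []\<close> by (intro exI[of _ 0]) simp
  qed
qed

lemma sorted_wrt_ext_less_gap_comparable:
  assumes "sorted_wrt ext_less zs" "Suc i < length zs"
    and "ext_less (zs ! i) (Elem e)" "ext_less (Elem e) (zs ! Suc i)" "Elem c \<in> set zs"
  shows "c \<le> e \<or> e \<le> c"
proof -
  obtain m where m: "m < length zs" "zs ! m = Elem c"
    using assms(5) by (metis in_set_conv_nth)
  show ?thesis
  proof (cases "m \<le> i")
    case True
    then have "zs ! m = zs ! i \<or> ext_less (zs ! m) (zs ! i)"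
      using sorted_wrt_ext_less_nth_le[OF assms(1) True] assms(2) by simp
    then have "ext_less (Elem c) (Elem e)"
      using assms(3) m(2) ext_less_trans[of "Elem c" "zs ! i" "Elem e"] by metis
    then show ?thesis
      by (simp add: less_imp_le)
  next
    case False
    then have "zs ! Suc i = zs ! m \<or> ext_less (zs ! Suc i) (zs ! m)"
      using sorted_wrt_ext_less_nth_le[OF assms(1), of "Suc i" m] m(1) by simp
    then have "ext_less (Elem e) (Elem c)"
      using assms(4) m(2) ext_less_trans[of "Elem e" "zs ! Suc i" "Elem c"] by metis
    then show ?thesis
      by (simp add: less_imp_le)
  qed
qed

text \<open>Take a longest such list; inserting a further element would make it longer.\<close>
lemma exists_unrefinable_sorted_list:
  assumes "finite S" "x \<in> S" "y \<in> S" "ext_less x y"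
  obtains zs where "sorted_wrt ext_less zs" "zs \<noteq> []" "hd zs = x" "last zs = y" "set zs \<subseteq> S"
    and "\<And>i z. Suc i < length zs \<Longrightarrow> z \<in> S \<Longrightarrow> ext_less (zs ! i) z \<Longrightarrow> \<not> ext_less z (zs ! Suc i)"
proof -
  define L where "L zs \<longleftrightarrow> sorted_wrt ext_less zs \<and> zs \<noteq> [] \<and> hd zs = x \<and> last zs = y \<and> set zs \<subseteq> S"
    for zs
  have bounded: "\<forall>zs. L zs \<longrightarrow> length zs < Suc (card S)"
  proof (intro allI impI)
    fix zs assume "L zs"
    then have "length zs = card (set zs)" "set zs \<subseteq> S"
      by (auto simp: L_def distinct_card sorted_wrt_ext_less_distinct)
    then show "length zs < Suc (card S)"
      using card_mono[OF assms(1), of "set zs"] by simp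
  qed
  have "L [x, y]"
    using assms by (simp add: L_def)
  then obtain zs where zs: "L zs" and longest: "\<And>ws. L ws \<Longrightarrow> length ws \<le> length zs"
    using ex_has_greatest_nat[OF _ bounded] by blast
  have zs_props: "sorted_wrt ext_less zs" "zs \<noteq> []" "hd zs = x" "last zs = y" "set zs \<subseteq> S"
    using zs by (simp_all add: L_def)
  show thesis
  proof (rule that[OF zs_props])
    fix i z assume i: "Suc i < length zs" and z: "z \<in> S" "ext_less (zs ! i) z"
    show "\<not> ext_less z (zs ! Suc i)"
    proof
      assume z_below: "ext_less z (zs ! Suc i)"
      let ?ws = "take (Suc i) zs @ z # drop (Suc i) zs"
      have "set zs = set (take (Suc i) zs) \<union> set (drop (Suc i) zs)"
        by (metis append_take_drop_id set_append)
      then have "set ?ws \<subseteq> S"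
        using zs_props(5) z(1) by auto
      moreover have "hd ?ws = x"
        using i zs_props(3) by (cases zs) auto
      moreover have "last ?ws = y"
        using i zs_props(4) by (simp add: last_drop)
      moreover have "sorted_wrt ext_less ?ws"
        using sorted_wrt_ext_less_insert[OF zs_props(1) i z(2) z_below] .
      moreover have "?ws \<noteq> []"
        by simp
      ultimately have "L ?ws"
        unfolding L_def by blast
      then show False
        using longest[of ?ws] i by simp
    qed
  qed
qed

section \<open>Saturated chains and \<open>q\<^sup>(\<^sup>\<epsilon>\<^sup>)dist\<close>\<close>

definition sat_chains :: "'a::order set \<Rightarrow> 'a ext \<Rightarrow> 'a ext \<Rightarrow> 'a ext list set" where
  "sat_chains P x y = {zs. sat_chain P zs \<and> hd zs = x \<and> last zs = y}"

lemma not_sat_chain_Nil [simp]: "\<not> sat_chain P []"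
  by (simp add: sat_chain_def)

lemma sat_chain_singleton [simp]: "sat_chain P [z] \<longleftrightarrow> in_ext P z"
  by (simp add: sat_chain_def)

lemma sat_chain_Cons2:
  "sat_chain P (a # b # zs) \<longleftrightarrow> covers_ext P a b \<and> sat_chain P (b # zs)"
proof -
  have "(\<forall>i. Suc i < length (a # b # zs) \<longrightarrow> covers_ext P ((a # b # zs) ! i) ((a # b # zs) ! Suc i))
    \<longleftrightarrow> covers_ext P a b \<and>
        (\<forall>i. Suc i < length (b # zs) \<longrightarrow> covers_ext P ((b # zs) ! i) ((b # zs) ! Suc i))"
    by (metis (no_types, lifting) Suc_less_eq length_Cons not0_implies_Suc nth_Cons_0 nth_Cons_Suc
        zero_less_Suc)
  then show ?thesis
    unfolding sat_chain_def covers_ext_def by auto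
qed

lemma sat_chain_sorted: "sat_chain P zs \<Longrightarrow> sorted_wrt ext_less zs"
  unfolding sat_chain_def covers_ext_def
  by (simp add: sorted_wrt_iff_nth_Suc_transp[OF transp_ext_less])

lemma sat_chain_in_ext: "sat_chain P zs \<Longrightarrow> z \<in> set zs \<Longrightarrow> in_ext P z"
  by (simp add: sat_chain_def)

lemma sat_chain_length_le:
  assumes "finite P" "sat_chain P zs"
  shows "length zs \<le> card {z. in_ext P z}"
proof -
  have "length zs = card (set zs)"
    using sorted_wrt_ext_less_distinct[OF sat_chain_sorted[OF assms(2)]] by (simp add: distinct_card)
  also have "\<dots> \<le> card {z. in_ext P z}"
    using sat_chain_in_ext[OF assms(2)] by (intro card_mono[OF finite_in_ext[OF assms(1)]]) auto
  finally show ?thesis .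
qed

lemma finite_sat_chains:
  assumes "finite P"
  shows "finite (sat_chains P x y)"
proof -
  have "sat_chains P x y \<subseteq> {zs. set zs \<subseteq> {z. in_ext P z} \<and> length zs \<le> card {z. in_ext P z}}"
    using sat_chain_length_le[OF assms] sat_chain_in_ext unfolding sat_chains_def by blast
  then show ?thesis
    using finite_lists_length_le[OF finite_in_ext[OF assms]] finite_subset by blast
qed

lemma sat_chain_append:
  "sat_chain P zs \<Longrightarrow> sat_chain P ws \<Longrightarrow> last zs = hd ws \<Longrightarrow> sat_chain P (zs @ tl ws)"
proof (induction zs rule: induct_list012)
  case 1
  then show ?case by (simp add: sat_chain_def)
next
  case (2 x)
  then show ?case by (cases ws) auto
next
  case (3 x y zs)
  then show ?case by (auto simp: sat_chain_Cons2)
qed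

lemma sat_chain_take: "sat_chain P zs \<Longrightarrow> i < length zs \<Longrightarrow> sat_chain P (take (Suc i) zs)"
  unfolding sat_chain_def by (auto dest: in_set_takeD)

lemma sat_chain_drop: "sat_chain P zs \<Longrightarrow> i < length zs \<Longrightarrow> sat_chain P (drop i zs)"
  unfolding sat_chain_def by (auto dest: in_set_dropD)

lemma sat_chain_hd_less_last:
  assumes "sat_chain P zs" "2 \<le> length zs"
  shows "ext_less (hd zs) (last zs)"
proof -
  have "zs \<noteq> []"
    using assms(2) by auto
  then show ?thesis
    using sorted_wrt_nth_less[OF sat_chain_sorted[OF assms(1)], of 0 "length zs - 1"] assms(2)
    by (simp add: hd_conv_nth last_conv_nth)
qed

lemma sat_chain_length_ge_2: "sat_chain P zs \<Longrightarrow> hd zs \<noteq> last zs \<Longrightarrow> 2 \<le> length zs"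
  by (cases zs; cases "tl zs") auto

lemma sat_chain_hd_eq_last:
  assumes "sat_chain P zs" "hd zs = last zs"
  shows "zs = [hd zs]"
proof -
  have "zs \<noteq> []" "\<not> 2 \<le> length zs"
    using assms sat_chain_hd_less_last[of P zs] by (auto simp: sat_chain_def)
  then show ?thesis
    by (cases zs; cases "tl zs") auto
qed

lemma sat_chain_covers_last: "sat_chain P (zs @ [u, v]) \<Longrightarrow> covers_ext P u v"
proof (induction zs)
  case Nil
  then show ?case by (simp add: sat_chain_Cons2)
next
  case (Cons a zs)
  then show ?case by (cases zs) (auto simp: sat_chain_Cons2)
qed

lemma sat_chains_nonempty:
  assumes "finite P" "in_ext P x" "in_ext P y" "ext_less x y"
  shows "sat_chains P x y \<noteq> {}"
proof -
  obtain zs where zs: "sorted_wrt ext_less zs" "zs \<noteq> []" "hd zs = x" "last zs = y"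
    "set zs \<subseteq> {z. in_ext P z}"
    and unrefinable: "\<And>i z. Suc i < length zs \<Longrightarrow> in_ext P z \<Longrightarrow> ext_less (zs ! i) z
      \<Longrightarrow> \<not> ext_less z (zs ! Suc i)"
    using exists_unrefinable_sorted_list[OF finite_in_ext[OF assms(1)], of x y] assms by auto
  have "in_ext P (zs ! i)" if "i < length zs" for i
    using zs(5) nth_mem[OF that] by blast
  then have "sat_chain P zs"
    unfolding sat_chain_def covers_ext_def
    using zs unrefinable by (auto simp: sorted_wrt_nth_less)
  then show ?thesis
    using zs by (auto simp: sat_chains_def)
qed

lemma sat_chains_of_covers:
  assumes "covers_ext P x y"
  shows "sat_chains P x y = {[x, y]}"
proof -
  have unique: "zs = [x, y]" if zs: "sat_chain P zs" "hd zs = x" "last zs = y" for zs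
  proof -
    have "ext_less x y"
      using assms by (simp add: covers_ext_def)
    then have long: "2 \<le> length zs"
      using sat_chain_length_ge_2[OF zs(1)] zs(2,3) by (metis ext_less_irrefl)
    have "\<not> 3 \<le> length zs"
    proof
      assume "3 \<le> length zs"
      then have "ext_less (zs ! 0) (zs ! 1)" "ext_less (zs ! 1) (zs ! (length zs - 1))"
        "in_ext P (zs ! 1)"
        using sorted_wrt_nth_less[OF sat_chain_sorted[OF zs(1)], of 0 1]
          sorted_wrt_nth_less[OF sat_chain_sorted[OF zs(1)], of 1 "length zs - 1"]
          sat_chain_in_ext[OF zs(1) nth_mem, of 1]
        by simp_all
      moreover have "zs ! 0 = x" "zs ! (length zs - 1) = y"
        using zs(2,3) long by (simp_all add: hd_conv_nth last_conv_nth flip: length_greater_0_conv)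
      ultimately show False
        using assms unfolding covers_ext_def by blast
    qed
    then have "length zs = 2"
      using long by simp
    then have "zs = [zs ! 0, zs ! 1]"
      by (intro nth_equalityI) (auto simp: less_2_cases_iff)
    then show ?thesis
      using zs(2,3) by (metis last.simps list.sel(1) list.simps(3))
  qed
  have "sat_chain P [x, y]"
    using assms unfolding sat_chain_Cons2 by (simp add: covers_ext_def)
  show ?thesis
  proof (intro set_eqI iffI)
    fix zs assume "zs \<in> sat_chains P x y"
    then show "zs \<in> {[x, y]}"
      using unique[of zs] by (simp add: sat_chains_def)
  next
    fix zs assume "zs \<in> {[x, y]}"
    then show "zs \<in> sat_chains P x y"
      using \<open>sat_chain P [x, y]\<close> by (simp add: sat_chains_def)
  qed
qed

lemma qdist_eq_Max:
  "qdist P \<epsilon> x y = Max ((\<lambda>zs. \<epsilon> * int (length zs - 1)) ` sat_chains P x y)"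
proof -
  have "{\<epsilon> * int t | t. \<exists>zs. sat_chain P zs \<and> length zs = Suc t \<and> hd zs = x \<and> last zs = y}
    = (\<lambda>zs. \<epsilon> * int (length zs - 1)) ` sat_chains P x y"
  proof (intro set_eqI iffI)
    fix v assume "v \<in> {\<epsilon> * int t | t. \<exists>zs. sat_chain P zs \<and> length zs = Suc t \<and> hd zs = x \<and> last zs = y}"
    then obtain t zs where "v = \<epsilon> * int t" "sat_chain P zs" "length zs = Suc t" "hd zs = x" "last zs = y"
      by blast
    then show "v \<in> (\<lambda>zs. \<epsilon> * int (length zs - 1)) ` sat_chains P x y"
      by (intro image_eqI[of _ _ zs]) (auto simp: sat_chains_def)
  next
    fix v assume "v \<in> (\<lambda>zs. \<epsilon> * int (length zs - 1)) ` sat_chains P x y"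
    then obtain zs where zs: "v = \<epsilon> * int (length zs - 1)" "sat_chain P zs" "hd zs = x" "last zs = y"
      by (auto simp: sat_chains_def)
    then have "length zs = Suc (length zs - 1)"
      by (cases zs) auto
    then show "v \<in> {\<epsilon> * int t | t. \<exists>zs. sat_chain P zs \<and> length zs = Suc t \<and> hd zs = x \<and> last zs = y}"
      using zs by blast
  qed
  then show ?thesis
    by (simp add: qdist_def)
qed

lemma qdist_ge_chain:
  "finite P \<Longrightarrow> zs \<in> sat_chains P x y \<Longrightarrow> \<epsilon> * int (length zs - 1) \<le> qdist P \<epsilon> x y"
  unfolding qdist_eq_Max by (rule Max_ge) (auto simp: finite_sat_chains)

lemma qdist_attained:
  assumes "finite P" "in_ext P x" "in_ext P y" "ext_less x y"
  obtains zs where "zs \<in> sat_chains P x y" "qdist P \<epsilon> x y = \<epsilon> * int (length zs - 1)"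
proof -
  have "qdist P \<epsilon> x y \<in> (\<lambda>zs. \<epsilon> * int (length zs - 1)) ` sat_chains P x y"
    unfolding qdist_eq_Max
    using sat_chains_nonempty[OF assms] by (intro Max_in) (auto simp: finite_sat_chains assms(1))
  then show thesis
    using that by blast
qed

lemma qdist_covers: "covers_ext P x y \<Longrightarrow> qdist P \<epsilon> x y = \<epsilon>"
  by (simp add: qdist_eq_Max sat_chains_of_covers)

lemma qdist_superadditive:
  assumes "finite P" "in_ext P x" "in_ext P a" "in_ext P y" "ext_less x a" "ext_less a y"
  shows "qdist P \<epsilon> x a + qdist P \<epsilon> a y \<le> qdist P \<epsilon> x y"
proof -
  obtain zs where zs: "zs \<in> sat_chains P x a" "qdist P \<epsilon> x a = \<epsilon> * int (length zs - 1)"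
    using qdist_attained[OF assms(1,2,3,5)] .
  obtain ws where ws: "ws \<in> sat_chains P a y" "qdist P \<epsilon> a y = \<epsilon> * int (length ws - 1)"
    using qdist_attained[OF assms(1,3,4,6)] .
  have long: "2 \<le> length zs" "2 \<le> length ws"
    using zs(1) ws(1) assms(5,6) sat_chain_length_ge_2 by (fastforce simp: sat_chains_def)+
  have "sat_chain P (zs @ tl ws)"
    using zs(1) ws(1) sat_chain_append[of P zs ws] by (simp add: sat_chains_def)
  moreover have "hd (zs @ tl ws) = x"
    using zs(1) long by (cases zs) (auto simp: sat_chains_def)
  moreover have "last (zs @ tl ws) = y"
    using ws(1) long by (cases ws) (auto simp: sat_chains_def)
  ultimately have "zs @ tl ws \<in> sat_chains P x y"
    by (simp add: sat_chains_def)
  then have "\<epsilon> * int (length (zs @ tl ws) - 1) \<le> qdist P \<epsilon> x y"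
    by (rule qdist_ge_chain[OF assms(1)])
  moreover have "int (length (zs @ tl ws) - 1) = int (length zs - 1) + int (length ws - 1)"
    using long by simp
  ultimately show ?thesis
    using zs(2) ws(2) by (simp add: distrib_left)
qed

text \<open>\<open>Max {}\<close> is the unspecified value of \<open>qdist\<close> at pairs joined by no saturated chain.\<close>
lemma qdist_abs_le:
  assumes "finite P"
  shows "\<bar>qdist P \<epsilon> x y\<bar> \<le> \<bar>\<epsilon>\<bar> * int (card {z. in_ext P z}) + \<bar>Max ({}::int set)\<bar>"
proof (cases "sat_chains P x y = {}")
  case True
  then show ?thesis
    by (simp add: qdist_eq_Max)
next
  case False
  have "qdist P \<epsilon> x y \<in> (\<lambda>zs. \<epsilon> * int (length zs - 1)) ` sat_chains P x y"
    unfolding qdist_eq_Max using False by (intro Max_in) (simp_all add: finite_sat_chains assms)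
  then obtain zs where zs: "zs \<in> sat_chains P x y" "qdist P \<epsilon> x y = \<epsilon> * int (length zs - 1)"
    by blast
  have "length zs \<le> card {z. in_ext P z}"
    using sat_chain_length_le[OF assms] zs(1) by (simp add: sat_chains_def)
  then have "\<bar>\<epsilon> * int (length zs - 1)\<bar> \<le> \<bar>\<epsilon>\<bar> * int (card {z. in_ext P z})"
    by (simp add: abs_mult mult_left_mono)
  then show ?thesis
    using zs(2) by simp
qed

lemma qseq_0 [simp]: "qseq P \<epsilon> w z 0 = qdist P \<epsilon> (w 0) (z 0)"
  by (simp add: qseq_def)

lemma qseq_Suc:
  "qseq P \<epsilon> w z (Suc s) = qseq P \<epsilon> w z s + qdist P \<epsilon> (w (Suc s)) (z (Suc s)) - qdist P \<epsilon> (w (Suc s)) (z s)"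
  by (simp add: qseq_def)

lemma qseq_cong:
  "(\<And>l. l \<le> s \<Longrightarrow> w l = w' l \<and> z l = z' l) \<Longrightarrow> qseq P \<epsilon> w z s = qseq P \<epsilon> w' z' s"
  unfolding qseq_def by (intro arg_cong2[where f = "(-)"] sum.cong) auto

section \<open>Maximal chains\<close>

lemma sorted_wrt_ext_less_total:
  assumes "sorted_wrt ext_less zs" "u \<in> set zs" "v \<in> set zs"
  shows "u = v \<or> ext_less u v \<or> ext_less v u"
proof -
  obtain i j where "i < length zs" "j < length zs" "u = zs ! i" "v = zs ! j"
    using assms(2,3) by (metis in_set_conv_nth)
  then show ?thesis
    using sorted_wrt_nth_less[OF assms(1), of i j] sorted_wrt_nth_less[OF assms(1), of j i]
    by (metis linorder_neqE_nat)
qed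

lemma ext_less_Elem_comparable:
  "w \<noteq> Elem e \<Longrightarrow> (\<And>c. w = Elem c \<Longrightarrow> c \<le> e \<or> e \<le> c) \<Longrightarrow> ext_less w (Elem e) \<or> ext_less (Elem e) w"
  by (cases w) (auto simp: order.order_iff_strict)

lemma sat_chain_full_maximal_chain:
  assumes "sat_chain P zs" "hd zs = NegInf" "last zs = PosInf"
  shows "maximal_chain P {a. Elem a \<in> set zs}"
proof -
  let ?C = "{a. Elem a \<in> set zs}"
  have sorted: "sorted_wrt ext_less zs"
    using sat_chain_sorted[OF assms(1)] .
  have "?C \<subseteq> P"
    using sat_chain_in_ext[OF assms(1)] by fastforce
  moreover have "a \<le> b \<or> b \<le> a" if "a \<in> ?C" "b \<in> ?C" for a b
    using sorted_wrt_ext_less_total[OF sorted, of "Elem a" "Elem b"] that by auto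
  ultimately have chain: "is_chain_in P ?C"
    by (simp add: is_chain_in_def)
  have "D = ?C" if D: "is_chain_in P D" "?C \<subseteq> D" for D
  proof (rule ccontr)
    assume "D \<noteq> ?C"
    then obtain e where e: "e \<in> D" "Elem e \<notin> set zs"
      using D(2) by blast
    have "e \<in> P"
      using D(1) e(1) by (auto simp: is_chain_in_def)
    have "ext_less w (Elem e) \<or> ext_less (Elem e) w" if "w \<in> set zs" for w
      using that e D unfolding is_chain_in_def by (intro ext_less_Elem_comparable) auto
    then obtain i where "Suc i < length zs" "ext_less (zs ! i) (Elem e)" "ext_less (Elem e) (zs ! Suc i)"
      using sorted_wrt_ext_less_gap[OF sorted] assms e(2) by fastforce
    then show False
      using assms(1) \<open>e \<in> P\<close> unfolding sat_chain_def covers_ext_def by force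
  qed
  then show ?thesis
    using chain by (auto simp: maximal_chain_def)
qed

lemma maximal_chain_full_sat_chain:
  assumes "finite P" "maximal_chain P C"
  obtains zs where "zs \<in> sat_chains P NegInf PosInf" "{a. Elem a \<in> set zs} = C"
proof -
  let ?S = "insert NegInf (insert PosInf (Elem ` C))"
  have CP: "C \<subseteq> P" and comparable: "\<And>a b. a \<in> C \<Longrightarrow> b \<in> C \<Longrightarrow> a \<le> b \<or> b \<le> a"
    using assms(2) by (auto simp: maximal_chain_def is_chain_in_def)
  have "finite ?S"
    using finite_subset[OF CP assms(1)] by simp
  then obtain zs where sorted: "sorted_wrt ext_less zs" and zs: "zs \<noteq> []" "hd zs = NegInf"
    "last zs = PosInf" "set zs \<subseteq> ?S"
    and unrefinable: "\<And>i z. Suc i < length zs \<Longrightarrow> z \<in> ?S \<Longrightarrow> ext_less (zs ! i) z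
      \<Longrightarrow> \<not> ext_less z (zs ! Suc i)"
    using exists_unrefinable_sorted_list[of ?S NegInf PosInf] by auto
  have C_in_zs: "Elem c \<in> set zs" if c: "c \<in> C" for c
  proof (rule ccontr)
    assume "Elem c \<notin> set zs"
    moreover have "ext_less w (Elem c) \<or> ext_less (Elem c) w" if "w \<in> set zs" for w
      using that zs(4) c comparable \<open>Elem c \<notin> set zs\<close>
      by (intro ext_less_Elem_comparable) auto
    ultimately obtain i where "Suc i < length zs" "ext_less (zs ! i) (Elem c)"
      "ext_less (Elem c) (zs ! Suc i)"
      using sorted_wrt_ext_less_gap[OF sorted zs(1)] zs(2,3) by fastforce
    then show False
      using unrefinable c by blast
  qed
  have in_P: "in_ext P z" if "z \<in> set zs" for z
  proof -
    have "z \<in> ?S"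
      using that zs(4) by blast
    then show ?thesis
      using CP by auto
  qed
  have covers: "covers_ext P (zs ! i) (zs ! Suc i)" if i: "Suc i < length zs" for i
  proof -
    have "\<not> (ext_less (zs ! i) (Elem e) \<and> ext_less (Elem e) (zs ! Suc i))" if "e \<in> P" for e
    proof
      assume between: "ext_less (zs ! i) (Elem e) \<and> ext_less (Elem e) (zs ! Suc i)"
      then have "e \<notin> C"
        using unrefinable[OF i] by blast
      have "c \<le> e \<or> e \<le> c" if "c \<in> C" for c
        using sorted_wrt_ext_less_gap_comparable[OF sorted i] between C_in_zs[OF that] by blast
      then have "is_chain_in P (insert e C)"
        using CP comparable \<open>e \<in> P\<close> unfolding is_chain_in_def by blast
      then show False
        using assms(2) \<open>e \<notin> C\<close> unfolding maximal_chain_def by blast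
    qed
    moreover have "in_ext P w \<Longrightarrow> ext_less (zs ! i) w \<Longrightarrow> ext_less w (zs ! Suc i) \<Longrightarrow> \<exists>e\<in>P. w = Elem e"
      for w by (cases w) auto
    moreover have "ext_less (zs ! i) (zs ! Suc i)"
      using sorted_wrt_nth_less[OF sorted, of i "Suc i"] i by simp
    moreover have "in_ext P (zs ! i)" "in_ext P (zs ! Suc i)"
      using in_P i by simp_all
    ultimately show ?thesis
      unfolding covers_ext_def by blast
  qed
  have "sat_chain P zs"
    unfolding sat_chain_def using zs(1) in_P covers by blast
  moreover have "{a. Elem a \<in> set zs} = C"
    using C_in_zs zs(4) by auto
  ultimately show thesis
    using that zs(2,3) by (simp add: sat_chains_def)
qed

lemma not_generator_of_split:
  assumes "in_S P 0 d1 \<xi>1" "0 < d1" "in_S P \<epsilon> (d - d1) (\<lambda>a. \<xi> a - \<xi>1 a)"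
  shows "\<not> is_generator P \<epsilon> d \<xi>"
proof -
  have "\<exists>d1 \<xi>1 d2 \<xi>2. in_S P 0 d1 \<xi>1 \<and> d1 > 0 \<and> in_S P \<epsilon> d2 \<xi>2 \<and>
      d = d1 + d2 \<and> (\<forall>x\<in>P. \<xi> x = \<xi>1 x + \<xi>2 x)"
    using assms by (intro exI[of _ d1] exI[of _ \<xi>1] exI[of _ "d - d1"] exI[of _ "\<lambda>a. \<xi> a - \<xi>1 a"]) simp
  then show ?thesis
    by (simp add: is_generator_def)
qed

section \<open>Heights\<close>

locale weighted_poset =
  fixes P :: "'a::order set" and \<epsilon> :: int and \<xi> :: "'a \<Rightarrow> int"
  assumes finite_P: "finite P" and weight_ge: "\<And>a. a \<in> P \<Longrightarrow> \<epsilon> \<le> \<xi> a"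
begin

text \<open>Setting the weight of \<open>\<infinity>\<close> to \<open>\<epsilon>\<close> makes the weight of a saturated chain from \<open>-\<infinity>\<close> to \<open>\<infinity>\<close>
  equal to the right-hand side \<open>\<xi>\<^sup>+(C) + \<epsilon>\<close> of the inequality defining \<open>S\<^sup>(\<^sup>\<epsilon>\<^sup>)\<close>.\<close>
definition ext_weight :: "'a ext \<Rightarrow> int" where
  "ext_weight z = (case z of Elem a \<Rightarrow> \<xi> a | PosInf \<Rightarrow> \<epsilon> | NegInf \<Rightarrow> 0)"

definition chain_weight :: "'a ext list \<Rightarrow> int" where
  "chain_weight zs = sum_list (map ext_weight (tl zs))"

definition height :: "'a ext \<Rightarrow> int" where
  "height v = Max (chain_weight ` sat_chains P NegInf v)"

definition excess :: "'a ext \<Rightarrow> int" where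
  "excess z = ext_weight z - \<epsilon>"

definition tight :: "'a ext \<Rightarrow> 'a ext \<Rightarrow> bool" where
  "tight x y \<longleftrightarrow> in_ext P x \<and> in_ext P y \<and> ext_less x y \<and>
     height y - height x = qdist P \<epsilon> x y + excess y"

lemma ext_weight_simps [simp]:
  "ext_weight (Elem a) = \<xi> a" "ext_weight PosInf = \<epsilon>" "ext_weight NegInf = 0"
  by (simp_all add: ext_weight_def)

lemma excess_PosInf [simp]: "excess PosInf = 0"
  by (simp add: excess_def)

lemma chain_weight_append:
  "zs \<noteq> [] \<Longrightarrow> chain_weight (zs @ tl ws) = chain_weight zs + chain_weight ws"
  by (cases zs) (simp_all add: chain_weight_def)

lemma chain_weight_snoc: "zs \<noteq> [] \<Longrightarrow> chain_weight (zs @ [z]) = chain_weight zs + ext_weight z"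
  by (cases zs) (simp_all add: chain_weight_def)

lemma height_ge: "zs \<in> sat_chains P NegInf v \<Longrightarrow> chain_weight zs \<le> height v"
  unfolding height_def by (rule Max_ge) (simp_all add: finite_sat_chains finite_P)

lemma height_attained:
  assumes "in_ext P v"
  obtains zs where "zs \<in> sat_chains P NegInf v" "height v = chain_weight zs"
proof -
  have "sat_chains P NegInf v \<noteq> {}"
  proof (cases "v = NegInf")
    case True
    then have "[NegInf] \<in> sat_chains P NegInf v"
      by (simp add: sat_chains_def)
    then show ?thesis by blast
  next
    case False
    then show ?thesis
      using sat_chains_nonempty[OF finite_P _ assms] by simp
  qed
  then have "height v \<in> chain_weight ` sat_chains P NegInf v"
    unfolding height_def by (intro Max_in) (simp_all add: finite_sat_chains finite_P)
  then show thesis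
    using that by blast
qed

lemma height_NegInf [simp]: "height NegInf = 0"
proof -
  have "sat_chains P NegInf NegInf = {[NegInf]}"
    using sat_chain_hd_eq_last[of P] by (fastforce simp: sat_chains_def)
  then show ?thesis
    by (simp add: height_def chain_weight_def)
qed

lemma height_add_chain_weight_le:
  assumes "sat_chain P ws"
  shows "height (hd ws) + chain_weight ws \<le> height (last ws)"
proof -
  have "ws \<noteq> []"
    using assms by auto
  then obtain zs where zs: "zs \<in> sat_chains P NegInf (hd ws)" "height (hd ws) = chain_weight zs"
    using height_attained sat_chain_in_ext[OF assms] by (metis hd_in_set)
  then have "zs \<noteq> []" "sat_chain P zs" "last zs = hd ws" "hd zs = NegInf"
    by (auto simp: sat_chains_def)
  then have "zs @ tl ws \<in> sat_chains P NegInf (last ws)"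
    using sat_chain_append[OF _ assms] \<open>ws \<noteq> []\<close> by (cases ws) (auto simp: sat_chains_def)
  then have "chain_weight (zs @ tl ws) \<le> height (last ws)"
    by (rule height_ge)
  then show ?thesis
    using chain_weight_append[OF \<open>zs \<noteq> []\<close>, of ws] zs(2) by simp
qed

lemma chain_weight_ge:
  assumes "sat_chain P ws" "2 \<le> length ws"
  shows "\<epsilon> * int (length ws - 1) + excess (last ws) \<le> chain_weight ws"
proof -
  obtain w r where wr: "ws = w # r" "r \<noteq> []"
    using assms(2) by (cases ws; cases "tl ws") auto
  define vs where "vs = butlast r"
  have ws: "ws = w # vs @ [last ws]"
    using wr by (simp add: vs_def)
  have "\<epsilon> \<le> ext_weight z" if "z \<in> set vs" for z
  proof -
    have "z \<in> set r"
      using that by (simp add: vs_def in_set_butlastD)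
    then have "ext_less w z" "in_ext P z"
      using sat_chain_sorted[OF assms(1)] sat_chain_in_ext[OF assms(1)] wr(1) by auto
    then show ?thesis
      by (cases z) (auto intro: weight_ge)
  qed
  then have "(\<Sum>z\<leftarrow>vs. \<epsilon>) \<le> (\<Sum>z\<leftarrow>vs. ext_weight z)"
    by (rule sum_list_mono)
  then have "\<epsilon> * int (length vs) \<le> sum_list (map ext_weight vs)"
    by (simp add: sum_list_triv mult.commute)
  moreover have "length ws - 1 = Suc (length vs)"
    by (subst ws) simp
  moreover have "chain_weight ws = sum_list (map ext_weight vs) + ext_weight (last ws)"
    by (subst ws) (simp add: chain_weight_def)
  ultimately show ?thesis
    by (simp add: excess_def algebra_simps)
qed

lemma qdist_plus_excess_le_height_diff:
  assumes "in_ext P x" "in_ext P y" "ext_less x y"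
  shows "qdist P \<epsilon> x y + excess y \<le> height y - height x"
proof -
  obtain ws where ws: "ws \<in> sat_chains P x y" "qdist P \<epsilon> x y = \<epsilon> * int (length ws - 1)"
    using qdist_attained[OF finite_P assms] .
  then have chain: "sat_chain P ws" "hd ws = x" "last ws = y"
    by (simp_all add: sat_chains_def)
  then have "2 \<le> length ws"
    using sat_chain_length_ge_2 assms(3) by fastforce
  then show ?thesis
    using chain_weight_ge[OF chain(1)] height_add_chain_weight_le[OF chain(1)] ws(2) chain(2,3)
    by fastforce
qed

lemma tight_iff_le:
  "tight x y \<longleftrightarrow> in_ext P x \<and> in_ext P y \<and> ext_less x y \<and>
     height y - height x - excess y \<le> qdist P \<epsilon> x y"
  using qdist_plus_excess_le_height_diff unfolding tight_def by fastforce

lemma chain_weight_full: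
  assumes "zs \<in> sat_chains P NegInf PosInf"
  shows "chain_weight zs = sum \<xi> {a. Elem a \<in> set zs} + \<epsilon>"
proof -
  let ?C = "{a. Elem a \<in> set zs}"
  have zs: "sat_chain P zs" "hd zs = NegInf" "last zs = PosInf"
    using assms by (simp_all add: sat_chains_def)
  then obtain r where r: "zs = NegInf # r"
    by (cases zs) auto
  have "distinct zs"
    using sorted_wrt_ext_less_distinct[OF sat_chain_sorted[OF zs(1)]] .
  then have distinct: "distinct r" and "NegInf \<notin> set r"
    using r by simp_all
  have "PosInf \<in> set zs"
    using last_in_set[of zs] zs(3) r by simp
  have set_r: "set r = insert PosInf (Elem ` ?C)"
  proof (intro equalityI subsetI)
    fix z assume z: "z \<in> set r"
    then have "z \<noteq> NegInf"
      using \<open>NegInf \<notin> set r\<close> by auto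
    moreover have "Elem a \<in> set zs" if "z = Elem a" for a
      using z r that by simp
    ultimately show "z \<in> insert PosInf (Elem ` ?C)"
      by (cases z) auto
  next
    fix z assume "z \<in> insert PosInf (Elem ` ?C)"
    then show "z \<in> set r"
      using r \<open>PosInf \<in> set zs\<close> by auto
  qed
  have "?C \<subseteq> P"
    using sat_chain_in_ext[OF zs(1)] by fastforce
  then have "finite ?C"
    using finite_P finite_subset by blast
  have "chain_weight zs = sum ext_weight (set r)"
    using distinct r by (simp add: chain_weight_def sum_list_distinct_conv_sum_set)
  also have "\<dots> = \<epsilon> + sum (ext_weight \<circ> Elem) ?C"
    unfolding set_r using \<open>finite ?C\<close> by (subst sum.insert) (auto simp: sum.reindex inj_on_def)
  finally show ?thesis
    by simp
qed

lemma in_S_iff_height_le: "in_S P \<epsilon> d \<xi> \<longleftrightarrow> height PosInf \<le> d"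
proof
  assume "in_S P \<epsilon> d \<xi>"
  obtain zs where zs: "zs \<in> sat_chains P NegInf PosInf" "height PosInf = chain_weight zs"
    using height_attained[of PosInf] by auto
  then have "maximal_chain P {a. Elem a \<in> set zs}"
    by (intro sat_chain_full_maximal_chain) (simp_all add: sat_chains_def)
  then show "height PosInf \<le> d"
    using \<open>in_S P \<epsilon> d \<xi>\<close> zs chain_weight_full by (simp add: in_S_def)
next
  assume "height PosInf \<le> d"
  have "sum \<xi> C + \<epsilon> \<le> d" if C: "maximal_chain P C" for C
  proof -
    obtain zs where "zs \<in> sat_chains P NegInf PosInf" "{a. Elem a \<in> set zs} = C"
      using maximal_chain_full_sat_chain[OF finite_P C] .
    then show ?thesis
      using height_ge chain_weight_full \<open>height PosInf \<le> d\<close> by fastforce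
  qed
  then show "in_S P \<epsilon> d \<xi>"
    using weight_ge by (simp add: in_S_def)
qed

lemma generator_height: "is_generator P \<epsilon> d \<xi> \<Longrightarrow> height PosInf = d"
proof -
  assume gen: "is_generator P \<epsilon> d \<xi>"
  then have "height PosInf \<le> d"
    using in_S_iff_height_le by (simp add: is_generator_def)
  moreover have "\<not> height PosInf \<le> d - 1"
  proof
    assume "height PosInf \<le> d - 1"
    then have "in_S P \<epsilon> (d - 1) \<xi>"
      using in_S_iff_height_le by simp
    moreover have "in_S P 0 1 (\<lambda>_. 0)"
      by (simp add: in_S_def)
    ultimately show False
      using not_generator_of_split[of P 1 "\<lambda>_. 0" \<epsilon> d \<xi>] gen by simp
  qed
  ultimately show ?thesis
    by simp
qed

section \<open>Tight paths\<close>

text \<open>A tight path \<open>X\<^sub>0 < Y\<^sub>0 > X\<^sub>1 < Y\<^sub>1 > \<dots> < Y\<^sub>t = \<infinity>\<close>: all pairs \<open>(X\<^sub>l, Y\<^sub>l)\<close> are tight, so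
  along it the height difference telescopes into the alternating sum \<open>q\<^sup>(\<^sup>\<epsilon>\<^sup>)\<close>.\<close>
definition tight_path :: "nat \<Rightarrow> (nat \<Rightarrow> 'a ext) \<Rightarrow> (nat \<Rightarrow> 'a ext) \<Rightarrow> bool" where
  "tight_path t X Y \<longleftrightarrow> Y t = PosInf \<and> (\<forall>l\<le>t. tight (X l) (Y l)) \<and> (\<forall>l<t. ext_less (X (Suc l)) (Y l))"

definition path_starts :: "'a ext set" where
  "path_starts = {x. \<exists>t X Y. tight_path t X Y \<and> X 0 = x}"

lemma tight_PosInf_path_start: "tight x PosInf \<Longrightarrow> x \<in> path_starts"
  unfolding path_starts_def tight_path_def
  by (intro CollectI exI[of _ 0] exI[of _ "\<lambda>_. x"] exI[of _ "\<lambda>_. PosInf"]) simp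

lemma tight_path_start_step:
  assumes "tight x y" "x' \<in> path_starts" "ext_less x' y"
  shows "x \<in> path_starts"
proof -
  obtain t X Y where path: "tight_path t X Y" "X 0 = x'"
    using assms(2) by (auto simp: path_starts_def)
  have "tight_path (Suc t) (case_nat x X) (case_nat y Y)"
    unfolding tight_path_def
  proof (intro conjI allI impI)
    show "case_nat y Y (Suc t) = PosInf"
      using path by (simp add: tight_path_def)
    fix l
    show "l \<le> Suc t \<Longrightarrow> tight (case_nat x X l) (case_nat y Y l)"
      using path assms(1) by (cases l) (auto simp: tight_path_def)
    show "l < Suc t \<Longrightarrow> ext_less (case_nat x X (Suc l)) (case_nat y Y l)"
      using path assms(3) by (cases l) (auto simp: tight_path_def)
  qed
  then show ?thesis
    unfolding path_starts_def by (intro CollectI exI[of _ "Suc t"]) auto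
qed

lemma path_start_cases:
  assumes "x \<in> path_starts"
  obtains y where "tight x y" "y = PosInf \<or> (\<exists>x'\<in>path_starts. ext_less x' y)"
proof -
  obtain t X Y where path: "tight_path t X Y" "X 0 = x"
    using assms by (auto simp: path_starts_def)
  show thesis
  proof (cases t)
    case 0
    then show ?thesis
      using path that by (auto simp: tight_path_def)
  next
    case (Suc t')
    then have "tight_path t' (\<lambda>l. X (Suc l)) (\<lambda>l. Y (Suc l))"
      using path by (auto simp: tight_path_def)
    then have "X 1 \<in> path_starts"
      unfolding path_starts_def by auto
    moreover have "ext_less (X 1) (Y 0)" "tight x (Y 0)"
      using path Suc by (auto simp: tight_path_def)
    ultimately show ?thesis
      using that by blast
  qed
qed

lemma height_diff_le_qseq:
  "(\<forall>l\<le>s. tight (w l) (z l)) \<Longrightarrow> (\<forall>l<s. ext_less (w (Suc l)) (z l))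
    \<Longrightarrow> height (z s) - height (w 0) - excess (z s) \<le> qseq P \<epsilon> w z s"
proof (induction s)
  case 0
  then show ?case by (simp add: tight_def)
next
  case (Suc s)
  have "height (z s) - height (w 0) - excess (z s) \<le> qseq P \<epsilon> w z s"
    using Suc by simp
  moreover have "tight (w (Suc s)) (z (Suc s))" "tight (w s) (z s)"
    using Suc.prems by simp_all
  moreover have "qdist P \<epsilon> (w (Suc s)) (z s) + excess (z s) \<le> height (z s) - height (w (Suc s))"
    using qdist_plus_excess_le_height_diff Suc.prems calculation(2,3) by (simp add: tight_def)
  ultimately show ?case
    unfolding qseq_Suc by (simp add: tight_def)
qed

lemma tight_path_suffix:
  assumes "tight_path t X Y" "l \<le> t"
  shows "tight_path (t - l) (\<lambda>k. X (l + k)) (\<lambda>k. Y (l + k))"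
  using assms by (auto simp: tight_path_def)

lemma tight_path_prefix:
  assumes "tight_path t X Y" "l \<le> t" "Y l = PosInf"
  shows "tight_path l X Y"
  using assms by (auto simp: tight_path_def)

lemma tight_path_skip:
  assumes "tight_path t X Y" "i < j" "j \<le> t" "ext_less (X j) (Y i)"
  defines "k \<equiv> j - Suc i"
  shows "tight_path (t - k) (\<lambda>l. if l \<le> i then X l else X (l + k)) (\<lambda>l. if l \<le> i then Y l else Y (l + k))"
  unfolding tight_path_def
proof (intro conjI allI impI)
  have "\<not> t - k \<le> i" "t - k + k = t"
    using assms(2,3) by (auto simp: k_def)
  then show "(if t - k \<le> i then Y (t - k) else Y (t - k + k)) = PosInf"
    using assms(1) by (simp add: tight_path_def)
  fix l
  show "l \<le> t - k \<Longrightarrow> tight (if l \<le> i then X l else X (l + k)) (if l \<le> i then Y l else Y (l + k))"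
    using assms(1,2,3) by (auto simp: tight_path_def k_def)
  assume "l < t - k"
  then consider "l < i" | "l = i" | "i < l"
    by linarith
  then show "ext_less (if Suc l \<le> i then X (Suc l) else X (Suc l + k)) (if l \<le> i then Y l else Y (l + k))"
  proof cases
    case 3
    then show ?thesis
      using assms(1) \<open>l < t - k\<close> by (auto simp: tight_path_def)
  qed (use assms \<open>l < t - k\<close> in \<open>auto simp: tight_path_def k_def\<close>)
qed

lemma tight_path_contract:
  assumes "tight_path t X Y" "i < j" "j \<le> t" "tight (X i) (Y j)"
  defines "k \<equiv> j - i"
  shows "tight_path (t - k) (\<lambda>l. if l \<le> i then X l else X (l + k)) (\<lambda>l. if l < i then Y l else Y (l + k))"
  unfolding tight_path_def
proof (intro conjI allI impI)
  have "\<not> t - k < i" "t - k + k = t"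
    using assms(2,3) by (auto simp: k_def)
  then show "(if t - k < i then Y (t - k) else Y (t - k + k)) = PosInf"
    using assms(1) by (simp add: tight_path_def)
  fix l
  assume l: "l \<le> t - k"
  then consider "l < i" | "l = i" | "i < l"
    by linarith
  then show "tight (if l \<le> i then X l else X (l + k)) (if l < i then Y l else Y (l + k))"
    by cases (use assms l in \<open>auto simp: tight_path_def k_def\<close>)
next
  fix l
  assume "l < t - k"
  then show "ext_less (if Suc l \<le> i then X (Suc l) else X (Suc l + k)) (if l < i then Y l else Y (l + k))"
    using assms(1,2,3) by (auto simp: tight_path_def k_def)
qed

definition shortest_tight_path :: "nat \<Rightarrow> (nat \<Rightarrow> 'a ext) \<Rightarrow> (nat \<Rightarrow> 'a ext) \<Rightarrow> bool" where
  "shortest_tight_path T X Y \<longleftrightarrow> tight_path T X Y \<and> X 0 = NegInf \<and>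
     (\<forall>T' X' Y'. tight_path T' X' Y' \<and> X' 0 = NegInf \<longrightarrow> T \<le> T')"

lemma exists_shortest_tight_path:
  assumes "NegInf \<in> path_starts"
  shows "\<exists>T X Y. shortest_tight_path T X Y"
proof -
  define Q where "Q t \<longleftrightarrow> (\<exists>X Y. tight_path t X Y \<and> X 0 = NegInf)" for t
  have "\<exists>t. Q t"
    using assms by (auto simp: path_starts_def Q_def)
  then have "Q (LEAST t. Q t)"
    by (rule LeastI_ex)
  moreover have "(LEAST t. Q t) \<le> T'" if "tight_path T' X' Y'" "X' 0 = NegInf" for T' X' Y'
    using that by (intro Least_le) (auto simp: Q_def)
  ultimately show ?thesis
    unfolding shortest_tight_path_def Q_def by blast
qed

context
  fixes T :: nat and X Y :: "nat \<Rightarrow> 'a ext"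
  assumes shortest_path: "shortest_tight_path T X Y"
begin

lemma shortest_path_tight: "tight_path T X Y" and shortest_path_start: "X 0 = NegInf"
  and shortest_path_minimal: "\<And>T' X' Y'. tight_path T' X' Y' \<Longrightarrow> X' 0 = NegInf \<Longrightarrow> T \<le> T'"
  using shortest_path unfolding shortest_tight_path_def by blast+

lemma shortest_path_inner_lower: "1 \<le> l \<Longrightarrow> l \<le> T \<Longrightarrow> X l \<noteq> NegInf"
  using shortest_path_minimal[OF tight_path_suffix[OF shortest_path_tight]] by fastforce

lemma shortest_path_inner_upper:
  assumes "l < T"
  shows "Y l \<noteq> PosInf"
proof
  assume "Y l = PosInf"
  then have "tight_path l X Y"
    using tight_path_prefix[OF shortest_path_tight] assms by simp
  then show False
    using shortest_path_minimal shortest_path_start assms by fastforce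
qed

lemma shortest_path_no_shortcut:
  assumes "i + 2 \<le> j" "j \<le> T"
  shows "\<not> ext_less (X j) (Y i)"
proof
  assume "ext_less (X j) (Y i)"
  moreover have "i < j"
    using assms(1) by simp
  ultimately have "T \<le> T - (j - Suc i)"
    using shortest_path_minimal[OF tight_path_skip[OF shortest_path_tight _ assms(2)]] shortest_path_start by simp
  then show False
    using assms by simp
qed

lemma shortest_path_reduced:
  assumes "i < j" "j \<le> T" "ext_less (X i) (Y j)"
  shows "qdist P \<epsilon> (X i) (Y j) < qseq P \<epsilon> (\<lambda>l. X (i + l)) (\<lambda>l. Y (i + l)) (j - i)"
proof (rule ccontr)
  assume "\<not> ?thesis"
  moreover have "height (Y (i + (j - i))) - height (X (i + 0)) - excess (Y (i + (j - i)))
      \<le> qseq P \<epsilon> (\<lambda>l. X (i + l)) (\<lambda>l. Y (i + l)) (j - i)"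
    using shortest_path_tight assms(1,2) by (intro height_diff_le_qseq) (auto simp: tight_path_def)
  ultimately have "height (Y j) - height (X i) - excess (Y j) \<le> qdist P \<epsilon> (X i) (Y j)"
    using assms(1) by simp
  moreover have "in_ext P (X i)" "in_ext P (Y j)"
    using shortest_path_tight assms(1,2) by (simp_all add: tight_path_def tight_def)
  ultimately have "tight (X i) (Y j)"
    using assms(3) unfolding tight_iff_le by simp
  then have "T \<le> T - (j - i)"
    using shortest_path_minimal[OF tight_path_contract[OF shortest_path_tight assms(1,2)]] shortest_path_start by simp
  then show False
    using assms(1,2) by simp
qed

lemma shortest_path_coordinates:
  obtains x y where "\<And>l. l \<le> T \<Longrightarrow> xseq x l = X l" "\<And>l. l \<le> T \<Longrightarrow> yseq T y l = Y l"
proof -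
  have tight_XY: "l \<le> T \<Longrightarrow> tight (X l) (Y l)" for l
    using shortest_path_tight by (simp add: tight_path_def)
  have "\<exists>a. 1 \<le> l \<and> l \<le> T \<longrightarrow> X l = Elem a" for l
    using shortest_path_inner_lower[of l] tight_XY[of l] by (cases "X l") (auto simp: tight_def)
  then obtain x where x: "\<And>l. 1 \<le> l \<Longrightarrow> l \<le> T \<Longrightarrow> X l = Elem (x l)"
    by metis
  have "\<exists>a. l < T \<longrightarrow> Y l = Elem a" for l
    using shortest_path_inner_upper[of l] tight_XY[of l] by (cases "Y l") (auto simp: tight_def)
  then obtain y where y: "\<And>l. l < T \<Longrightarrow> Y l = Elem (y l)"
    by metis
  have "xseq x l = X l" if "l \<le> T" for l
    using x[of l] that shortest_path_start by (cases "l = 0") (auto simp: xseq_def)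
  moreover have "yseq T y l = Y l" if "l \<le> T" for l
    using y[of l] that shortest_path_tight by (cases "l = T") (auto simp: yseq_def tight_path_def)
  ultimately show thesis
    using that by blast
qed

context
  fixes x y :: "nat \<Rightarrow> 'a"
  assumes xseq: "\<And>l. l \<le> T \<Longrightarrow> xseq x l = X l" and yseq: "\<And>l. l \<le> T \<Longrightarrow> yseq T y l = Y l"
begin

lemma shortest_path_condN: "condN P T x y"
proof -
  have X: "X l = Elem (x l)" if "1 \<le> l" "l \<le> T" for l
    using xseq[of l] that by (simp add: xseq_def)
  have Y: "Y l = Elem (y l)" if "l < T" for l
    using yseq[of l] that by (simp add: yseq_def)
  have tight_XY: "l \<le> T \<Longrightarrow> tight (X l) (Y l)" and link: "l < T \<Longrightarrow> ext_less (X (Suc l)) (Y l)" for l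
    using shortest_path_tight by (simp_all add: tight_path_def)
  show ?thesis
    unfolding condN_def
  proof (intro conjI allI impI)
    fix i assume "i < T"
    then show "y i \<in> P" "x (Suc i) < y i"
      using tight_XY[of i] link[of i] X[of "Suc i"] Y[of i] by (simp_all add: tight_def)
  next
    fix j assume "1 \<le> j \<and> j \<le> T"
    then show "x j \<in> P"
      using tight_XY[of j] X[of j] by (simp add: tight_def)
  next
    fix i assume "1 \<le> i \<and> i < T"
    then show "x i < y i"
      using tight_XY[of i] X[of i] Y[of i] by (simp add: tight_def)
  next
    fix i j assume "i < T \<and> 1 \<le> j \<and> j \<le> T \<and> i + 2 \<le> j"
    then show "\<not> x j < y i"
      using shortest_path_no_shortcut[of i j] X[of j] Y[of i] by simp
  qed
qed

lemma shortest_path_q_reduced: "q_reduced P \<epsilon> T x y"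
  unfolding q_reduced_def
proof (intro allI impI)
  fix i j assume ij: "i < j \<and> j \<le> T \<and> ext_less (xseq x i) (yseq T y j)"
  have "qseq P \<epsilon> (\<lambda>l. xseq x (i + l)) (\<lambda>l. yseq T y (i + l)) (j - i)
      = qseq P \<epsilon> (\<lambda>l. X (i + l)) (\<lambda>l. Y (i + l)) (j - i)"
    by (rule qseq_cong) (use ij in \<open>auto intro!: xseq yseq\<close>)
  then show "qdist P \<epsilon> (xseq x i) (yseq T y j)
      < qseq P \<epsilon> (\<lambda>l. xseq x (i + l)) (\<lambda>l. yseq T y (i + l)) (j - i)"
    using shortest_path_reduced[of i j] ij xseq[of i] yseq[of j] by simp
qed

lemma shortest_path_height_le_qseq: "height PosInf \<le> qseq P \<epsilon> (xseq x) (yseq T y) T"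
proof -
  have "qseq P \<epsilon> (xseq x) (yseq T y) T = qseq P \<epsilon> X Y T"
    using xseq yseq by (intro qseq_cong) simp
  moreover have "height (Y T) - height (X 0) - excess (Y T) \<le> qseq P \<epsilon> X Y T"
    using shortest_path_tight by (intro height_diff_le_qseq) (simp_all add: tight_path_def)
  ultimately show ?thesis
    using shortest_path_tight shortest_path_start by (simp add: tight_path_def)
qed

end

end

lemma reduced_sequence_above_height:
  assumes "NegInf \<in> path_starts"
  obtains t x y where "condN P t x y" "q_reduced P \<epsilon> t x y"
    and "height PosInf \<le> qseq P \<epsilon> (xseq x) (yseq t y) t"
proof -
  obtain T X Y where shortest: "shortest_tight_path T X Y"
    using exists_shortest_tight_path[OF assms] by blast
  obtain x y where coordinates: "\<And>l. l \<le> T \<Longrightarrow> xseq x l = X l" "\<And>l. l \<le> T \<Longrightarrow> yseq T y l = Y l"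
    using shortest_path_coordinates[OF shortest] by blast
  show thesis
    using that shortest_path_condN[OF shortest coordinates] shortest_path_q_reduced[OF shortest coordinates]
      shortest_path_height_le_qseq[OF shortest coordinates] by blast
qed

section \<open>Generators\<close>

lemma tight_of_covers:
  assumes "covers_ext P u c" "height c - height u = ext_weight c"
  shows "tight u c"
  using assms qdist_covers[OF assms(1)] by (simp add: tight_def covers_ext_def excess_def)

lemma tight_trans_excess_0:
  assumes "tight u w" "tight w y" "excess w = 0"
  shows "tight u y"
proof -
  have "qdist P \<epsilon> u w + qdist P \<epsilon> w y \<le> qdist P \<epsilon> u y"
    using assms(1,2) by (intro qdist_superadditive[OF finite_P]) (simp_all add: tight_def)
  moreover have "ext_less u y"
    using assms(1,2) ext_less_trans by (auto simp: tight_def)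
  ultimately show ?thesis
    using assms unfolding tight_iff_le by (auto simp: tight_def)
qed

lemma height_last_cover:
  assumes "in_ext P v" "v \<noteq> NegInf"
  obtains u where "covers_ext P u v" "height v = height u + ext_weight v"
proof -
  obtain zs where zs: "zs \<in> sat_chains P NegInf v" "height v = chain_weight zs"
    using height_attained[OF assms(1)] .
  then have chain: "sat_chain P zs" "hd zs = NegInf" "last zs = v"
    by (simp_all add: sat_chains_def)
  then have "2 \<le> length zs"
    using sat_chain_length_ge_2 assms(2) by metis
  then have "butlast zs \<noteq> []"
    by (cases zs) auto
  then obtain ws u where "butlast zs = ws @ [u]"
    by (metis append_butlast_last_id)
  moreover have "zs = butlast zs @ [last zs]"
    using \<open>butlast zs \<noteq> []\<close> by (cases zs) auto
  ultimately have zs_eq: "zs = ws @ [u, v]"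
    using chain(3) by simp
  then have cover: "covers_ext P u v"
    using sat_chain_covers_last chain(1) by blast
  have "take (Suc (length ws)) zs = ws @ [u]"
    using zs_eq by simp
  then have "ws @ [u] \<in> sat_chains P NegInf u"
    using sat_chain_take[OF chain(1), of "length ws"] chain(2) zs_eq by (cases ws) (auto simp: sat_chains_def)
  then have "chain_weight (ws @ [u]) \<le> height u"
    by (rule height_ge)
  moreover have "chain_weight zs = chain_weight (ws @ [u]) + ext_weight v"
    using zs_eq chain_weight_snoc[of "ws @ [u]" v] by simp
  moreover have "height u + ext_weight v \<le> height v"
    using height_add_chain_weight_le[of "[u, v]"] cover by (simp add: sat_chain_Cons2 covers_ext_def chain_weight_def)
  ultimately show thesis
    using that cover zs(2) by simp
qed

definition minimal_starts :: "'a set" where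
  "minimal_starts = {a \<in> P. Elem a \<in> path_starts \<and> \<not> (\<exists>x\<in>path_starts. ext_less x (Elem a))}"

lemma minimal_starts_antichain:
  "a \<in> minimal_starts \<Longrightarrow> b \<in> minimal_starts \<Longrightarrow> a \<le> b \<Longrightarrow> a = b"
  by (auto simp: minimal_starts_def order.order_iff_strict)

text \<open>If \<open>\<xi>(a) = \<epsilon>\<close>, the element \<open>u\<close> covered by \<open>a\<close> on a heaviest chain to \<open>a\<close> is tight with zero excess at
  \<open>a\<close>, so any tight path from \<open>a\<close> could be started at \<open>u < a\<close> instead.\<close>
lemma minimal_starts_weight_gt:
  assumes "a \<in> minimal_starts"
  shows "\<epsilon> < \<xi> a"
proof (rule ccontr)
  assume "\<not> \<epsilon> < \<xi> a"
  then have "\<xi> a = \<epsilon>" "a \<in> P"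
    using assms weight_ge by (auto simp: minimal_starts_def intro: antisym)
  obtain u where cover: "covers_ext P u (Elem a)" "height (Elem a) = height u + \<xi> a"
    using height_last_cover[of "Elem a"] \<open>a \<in> P\<close> by auto
  then have "tight u (Elem a)"
    by (intro tight_of_covers) simp_all
  obtain y where y: "tight (Elem a) y" "y = PosInf \<or> (\<exists>x'\<in>path_starts. ext_less x' y)"
    using path_start_cases assms by (auto simp: minimal_starts_def)
  have "tight u y"
    using tight_trans_excess_0[OF \<open>tight u (Elem a)\<close> y(1)] \<open>\<xi> a = \<epsilon>\<close> by (simp add: excess_def)
  then have "u \<in> path_starts"
    using y(2) tight_PosInf_path_start tight_path_start_step by blast
  then show False
    using assms cover(1) by (auto simp: minimal_starts_def covers_ext_def)
qed

lemma covers_path_start: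
  assumes "covers_ext P u c" "height c - height u = ext_weight c"
    and "c = PosInf \<or> (\<exists>x\<in>path_starts. x = c \<or> ext_less x c)" and "c \<notin> Elem ` minimal_starts"
  shows "u \<in> path_starts"
proof -
  have tight: "tight u c"
    using tight_of_covers[OF assms(1,2)] .
  show ?thesis
  proof (cases "\<exists>x\<in>path_starts. ext_less x c")
    case True
    then show ?thesis
      using tight_path_start_step[OF tight] by blast
  next
    case False
    have "c = PosInf"
    proof (cases c)
      case (Elem a)
      then have "a \<in> P"
        using assms(1) by (simp add: covers_ext_def)
      then show ?thesis
        using False assms(3,4) Elem by (auto simp: minimal_starts_def)
    qed (use assms(1) in \<open>auto simp: covers_ext_def\<close>)
    then show ?thesis
      using tight tight_PosInf_path_start by simp
  qed
qed

lemma height_on_heaviest_chain: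
  assumes "zs \<in> sat_chains P NegInf PosInf" "chain_weight zs = height PosInf" "k < length zs"
  shows "height (zs ! k) = chain_weight (take (Suc k) zs)"
proof (rule antisym)
  have chain: "sat_chain P zs" "hd zs = NegInf" "last zs = PosInf"
    using assms(1) by (simp_all add: sat_chains_def)
  have "hd (take (Suc k) zs) = NegInf"
    using chain(2) by (cases zs) auto
  moreover have "last (take (Suc k) zs) = zs ! k"
    using assms(3) by (simp add: take_Suc_conv_app_nth)
  ultimately have "take (Suc k) zs \<in> sat_chains P NegInf (zs ! k)"
    using sat_chain_take[OF chain(1) assms(3)] by (simp add: sat_chains_def)
  then show "chain_weight (take (Suc k) zs) \<le> height (zs ! k)"
    by (rule height_ge)
  have "height (zs ! k) + chain_weight (drop k zs) \<le> height PosInf"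
    using height_add_chain_weight_le[OF sat_chain_drop[OF chain(1) assms(3)]] chain(3) assms(3)
    by (simp add: hd_drop_conv_nth)
  moreover have "tl (drop k zs) = drop (Suc k) zs"
    by (simp add: drop_Suc tl_drop)
  then have "take (Suc k) zs @ tl (drop k zs) = zs"
    by simp
  then have "chain_weight zs = chain_weight (take (Suc k) zs) + chain_weight (drop k zs)"
    using chain_weight_append[of "take (Suc k) zs" "drop k zs"] assms(3) by (cases zs) auto
  ultimately show "height (zs ! k) \<le> chain_weight (take (Suc k) zs)"
    using assms(2) by simp
qed

text \<open>Walking down a heaviest maximal chain, every step is tight; so as long as no minimal start is
  met, the property of lying above a path start propagates from \<open>\<infinity>\<close> down to \<open>-\<infinity>\<close>.\<close>
lemma heaviest_chain_meets_minimal_starts: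
  assumes "NegInf \<notin> path_starts"
    and "zs \<in> sat_chains P NegInf PosInf" "chain_weight zs = height PosInf"
  shows "\<exists>a\<in>minimal_starts. Elem a \<in> set zs"
proof (rule ccontr)
  assume none: "\<not> ?thesis"
  define above where "above z \<longleftrightarrow> z = PosInf \<or> (\<exists>x\<in>path_starts. x = z \<or> ext_less x z)" for z
  have chain: "sat_chain P zs" "hd zs = NegInf" "last zs = PosInf"
    using assms(2) by (simp_all add: sat_chains_def)
  have "\<not> above (zs ! k)" if "k < length zs" for k
    using that
  proof (induction k)
    case 0
    then show ?case
      using chain(2) assms(1) by (cases zs) (auto simp: above_def)
  next
    case (Suc k)
    have cover: "covers_ext P (zs ! k) (zs ! Suc k)"
      using chain(1) Suc.prems by (simp add: sat_chain_def)
    have "take (Suc (Suc k)) zs = take (Suc k) zs @ [zs ! Suc k]"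
      using Suc.prems by (rule take_Suc_conv_app_nth)
    moreover have "take (Suc k) zs \<noteq> []"
      using Suc.prems by (cases zs) auto
    ultimately have "chain_weight (take (Suc (Suc k)) zs) = chain_weight (take (Suc k) zs) + ext_weight (zs ! Suc k)"
      using chain_weight_snoc by simp
    then have "height (zs ! Suc k) - height (zs ! k) = ext_weight (zs ! Suc k)"
      using height_on_heaviest_chain[OF assms(2,3)] Suc.prems by simp
    moreover have "zs ! Suc k \<notin> Elem ` minimal_starts"
      using none nth_mem[OF Suc.prems] by auto
    ultimately have "above (zs ! Suc k) \<Longrightarrow> zs ! k \<in> path_starts"
      using covers_path_start[OF cover] unfolding above_def by blast
    then show ?case
      using Suc by (auto simp: above_def)
  qed
  moreover have "zs \<noteq> []"
    using chain(1) by auto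
  then have "zs ! (length zs - 1) = PosInf" "length zs - 1 < length zs"
    using chain(3) by (simp_all add: last_conv_nth)
  ultimately show False
    by (auto simp: above_def)
qed

lemma in_S_minimal_starts_indicator: "in_S P 0 1 (\<lambda>a. of_bool (a \<in> minimal_starts))"
  unfolding in_S_def
proof (intro conjI allI impI ballI)
  fix C assume C: "maximal_chain P C"
  then have "finite C"
    using finite_P finite_subset by (auto simp: maximal_chain_def is_chain_in_def)
  have "a = b" if "a \<in> C \<inter> minimal_starts" "b \<in> C \<inter> minimal_starts" for a b
  proof -
    have "a \<le> b \<or> b \<le> a"
      using C that by (auto simp: maximal_chain_def is_chain_in_def)
    then show ?thesis
      using minimal_starts_antichain that by blast
  qed
  then have "card (C \<inter> minimal_starts) \<le> 1"
    using card_le_Suc0_iff_eq[of "C \<inter> minimal_starts"] \<open>finite C\<close> by simp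
  then show "(\<Sum>a\<in>C. of_bool (a \<in> minimal_starts)) + 0 \<le> (1::int)"
    using \<open>finite C\<close> by (simp add: Int_def)
qed simp

lemma in_S_minus_minimal_starts_indicator:
  assumes "is_generator P \<epsilon> d \<xi>" "NegInf \<notin> path_starts"
  shows "in_S P \<epsilon> (d - 1) (\<lambda>a. \<xi> a - of_bool (a \<in> minimal_starts))"
  unfolding in_S_def
proof (intro conjI allI impI ballI)
  fix a assume "a \<in> P"
  then show "\<epsilon> \<le> \<xi> a - of_bool (a \<in> minimal_starts)"
    using weight_ge minimal_starts_weight_gt by force
next
  fix C assume C: "maximal_chain P C"
  let ?m = "\<Sum>a\<in>C. of_bool (a \<in> minimal_starts) :: int"
  obtain zs where zs: "zs \<in> sat_chains P NegInf PosInf" "{a. Elem a \<in> set zs} = C"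
    using maximal_chain_full_sat_chain[OF finite_P C] .
  have "finite C"
    using C finite_P finite_subset by (auto simp: maximal_chain_def is_chain_in_def)
  have "chain_weight zs \<le> d"
    using height_ge[OF zs(1)] generator_height[OF assms(1)] by simp
  moreover have "1 \<le> ?m" if heavy: "chain_weight zs = d"
  proof -
    obtain a where a: "a \<in> minimal_starts" "a \<in> C"
      using heaviest_chain_meets_minimal_starts[OF assms(2) zs(1)] zs(2) heavy
        generator_height[OF assms(1)] by auto
    then show ?thesis
      using member_le_sum[of a C "\<lambda>a. of_bool (a \<in> minimal_starts) :: int"] \<open>finite C\<close> by simp
  qed
  moreover have "0 \<le> ?m"
    by (simp add: sum_nonneg)
  moreover have "(\<Sum>a\<in>C. \<xi> a - of_bool (a \<in> minimal_starts)) + \<epsilon> = chain_weight zs - ?m"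
    using chain_weight_full[OF zs(1)] zs(2) by (simp add: sum_subtractf)
  ultimately show "(\<Sum>a\<in>C. \<xi> a - of_bool (a \<in> minimal_starts)) + \<epsilon> \<le> d - 1"
    by linarith
qed

text \<open>Otherwise the indicator function of the minimal path starts splits off a factor of degree one.\<close>
lemma generator_NegInf_path_start:
  assumes "is_generator P \<epsilon> d \<xi>"
  shows "NegInf \<in> path_starts"
proof (rule ccontr)
  assume "NegInf \<notin> path_starts"
  then show False
    using not_generator_of_split[OF in_S_minimal_starts_indicator _
        in_S_minus_minimal_starts_indicator[OF assms]] assms by simp
qed

end

lemma condN_length_le_card:
  assumes "finite P" "condN P t x y"
  shows "t \<le> card P"
proof -
  have no_repeat: "y i \<noteq> y k" if "i < k" "k < t" for i k
  proof -
    have "x (Suc k) < y k" "\<not> x (Suc k) < y i"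
      using assms(2) that unfolding condN_def by auto
    then show ?thesis
      by auto
  qed
  have "i = k" if "i < t" "k < t" "y i = y k" for i k
    using no_repeat[of i k] no_repeat[of k i] that by (metis linorder_neqE_nat)
  then have "inj_on y {..<t}"
    by (auto intro: inj_onI)
  moreover have "y ` {..<t} \<subseteq> P"
    using assms(2) by (auto simp: condN_def)
  ultimately show ?thesis
    using card_inj_on_le[OF _ _ assms(1)] by fastforce
qed

lemma qseq_abs_le:
  assumes "\<And>u v. \<bar>qdist P \<epsilon> u v\<bar> \<le> K"
  shows "\<bar>qseq P \<epsilon> w z s\<bar> \<le> (2 * int s + 1) * K"
proof -
  have "\<bar>\<Sum>l\<in>{0..s}. qdist P \<epsilon> (w l) (z l)\<bar> \<le> (\<Sum>l\<in>{0..s}. \<bar>qdist P \<epsilon> (w l) (z l)\<bar>)"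
    by (rule sum_abs)
  also have "\<dots> \<le> (\<Sum>l\<in>{0..s}. K)"
    by (rule sum_mono) (rule assms)
  finally have first: "\<bar>\<Sum>l\<in>{0..s}. qdist P \<epsilon> (w l) (z l)\<bar> \<le> (int s + 1) * K"
    by (simp add: algebra_simps)
  have "\<bar>\<Sum>l<s. qdist P \<epsilon> (w (Suc l)) (z l)\<bar> \<le> (\<Sum>l<s. \<bar>qdist P \<epsilon> (w (Suc l)) (z l)\<bar>)"
    by (rule sum_abs)
  also have "\<dots> \<le> (\<Sum>l<s. K)"
    by (rule sum_mono) (rule assms)
  finally have second: "\<bar>\<Sum>l<s. qdist P \<epsilon> (w (Suc l)) (z l)\<bar> \<le> int s * K"
    by simp
  with first show ?thesis
    unfolding qseq_def by (simp add: algebra_simps abs_le_iff)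
qed

lemma finite_condN_qseq_values:
  assumes "finite P"
  shows "finite {qseq P \<epsilon> (xseq x) (yseq t y) t | t x y. condN P t x y \<and> R t x y}"
proof -
  define K where "K = \<bar>\<epsilon>\<bar> * int (card {z. in_ext P z}) + \<bar>Max ({}::int set)\<bar>"
  define B where "B = (2 * int (card P) + 1) * K"
  have K: "\<bar>qdist P \<epsilon> u v\<bar> \<le> K" for u v
    using qdist_abs_le[OF assms] by (simp add: K_def)
  have "\<bar>qseq P \<epsilon> (xseq x) (yseq t y) t\<bar> \<le> B" if "condN P t x y" for t x y
  proof -
    have "K \<ge> 0"
      by (simp add: K_def)
    then have "(2 * int t + 1) * K \<le> B"
      using condN_length_le_card[OF assms that] by (simp add: B_def mult_right_mono)
    then show ?thesis
      using qseq_abs_le[OF K] order.trans by blast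
  qed
  then have "{qseq P \<epsilon> (xseq x) (yseq t y) t | t x y. condN P t x y \<and> R t x y} \<subseteq> {-B..B}"
    by (force simp: abs_le_iff)
  then show ?thesis
    using finite_subset by blast
qed

theorem mainTheorem9:
  fixes P :: "'a::order set" and \<epsilon> d :: int and \<xi> :: "'a \<Rightarrow> int"
  assumes "finite P"
    and "\<epsilon> \<in> {1, -1}"
    and "is_generator P \<epsilon> d \<xi>"
  shows "d \<le> Max {qseq P \<epsilon> (xseq x) (yseq t y) t | t x y.
                    condN P t x y \<and> q_reduced P \<epsilon> t x y}"
proof -
  interpret weighted_poset P \<epsilon> \<xi>
    using assms(1,3) by unfold_locales (simp_all add: is_generator_def in_S_def)
  obtain t x y where "condN P t x y" "q_reduced P \<epsilon> t x y"
    and "height PosInf \<le> qseq P \<epsilon> (xseq x) (yseq t y) t"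
    using reduced_sequence_above_height[OF generator_NegInf_path_start[OF assms(3)]] .
  moreover have "height PosInf = d"
    using generator_height[OF assms(3)] .
  moreover have "qseq P \<epsilon> (xseq x) (yseq t y) t \<le> Max {qseq P \<epsilon> (xseq x) (yseq t y) t | t x y.
                    condN P t x y \<and> q_reduced P \<epsilon> t x y}"
    using calculation(1,2) by (intro Max_ge finite_condN_qseq_values[OF assms(1)]) blast
  ultimately show ?thesis
    by linarith
qed

end
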